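(* Let $n\ge 1$ be odd. Consider the generalized $n$-gene repressilator system $$\dot r_i = a_i(p_{i-1}) - d_{r_i}(r_i),\qquad \dot p_i = k_i(r_i) - d_{p_i}(p_i),\qquad i=1,\dots,n,$$ (indices mod $n$, so $p_0=p_n$), where the functions satisfy the standing assumptions described in the context. Suppose that for every $i=1,\dots,n$, $$\delta_i^R > a_i(0)\quad\text{and}\quad \delta_i^P > k_i\big(d_{r_i}^{-1}(a_i(0))\big),$$ where $\delta_i^R:=\lim_{x\to\infty} d_{r_i}(x)$ and $\delta_i^P:=\lim_{x\to\infty} d_{p_i}(x)$ (these limits may be $+\infty$). Then the system has a unique steady state in $(0,\infty)^{2n}$.
   Context: Standing assumptions: each transcription-rate function $a_i:[0,\infty)\to\mathbb{R}$ is $C^1$, satisfies $a_i([0,\infty))\subset[0,\infty)$, is strictly decreasing on $[0,\infty)$, and has $a_i(0)>0$. Each degradation-rate function $d_{r_i}, d_{p_i}$ and each translation-rate function $k_i$ is a $C^1$ function $[0,\infty)\to\mathbb{R}$ that vanishes at $0$ and is strictly increasing on $(0,\infty)$; in particular these are invertible on their ranges. Here $r_i$ is the concentration of mRNA-$i$ and $p_i$ that of protein-$i$. *)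

theory Defs
  imports "HOL-Analysis.Analysis"
begin

definition C1_nonneg :: "(real \<Rightarrow> real) \<Rightarrow> bool" where
  "C1_nonneg f \<longleftrightarrow> (\<exists>f'. continuous_on {0..} f' \<and>
      (\<forall>x\<ge>0. (f has_real_derivative f' x) (at x within {0..})))"

definition transcription_fun :: "(real \<Rightarrow> real) \<Rightarrow> bool" where
  "transcription_fun f \<longleftrightarrow> C1_nonneg f \<and> (\<forall>x\<ge>0. f x \<ge> 0) \<and>
      (\<forall>x y. 0 \<le> x \<longrightarrow> x < y \<longrightarrow> f y < f x) \<and> f 0 > 0"

definition rate_fun :: "(real \<Rightarrow> real) \<Rightarrow> bool" where
  "rate_fun f \<longleftrightarrow> C1_nonneg f \<and> f 0 = 0 \<and>
      (\<forall>x y. 0 < x \<longrightarrow> x < y \<longrightarrow> f x < f y)"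

text \<open>Steady state of the n-gene repressilator in (0,oo)^(2n); indices 0..n-1,
  the predecessor of i is (i + n - 1) mod n.\<close>
definition repressilator_steady_state ::
  "nat \<Rightarrow> (nat \<Rightarrow> real \<Rightarrow> real) \<Rightarrow> (nat \<Rightarrow> real \<Rightarrow> real) \<Rightarrow> (nat \<Rightarrow> real \<Rightarrow> real)
   \<Rightarrow> (nat \<Rightarrow> real \<Rightarrow> real) \<Rightarrow> (nat \<Rightarrow> real) \<Rightarrow> (nat \<Rightarrow> real) \<Rightarrow> bool" where
  "repressilator_steady_state n a dr k dp r p \<longleftrightarrow>
     (\<forall>i<n. r i > 0 \<and> p i > 0 \<and>
        a i (p ((i + n - 1) mod n)) - dr i (r i) = 0 \<and>
        k i (r i) - dp i (p i) = 0)"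

end

theory Submission
  imports Defs
begin

text \<open>At a steady state the levels of gene \<open>i\<close> are determined by the protein level
  \<open>x\<close> of its repressor: \<open>r\<^sub>i = dr\<^sub>i\<inverse> (a\<^sub>i x)\<close> and \<open>p\<^sub>i = F\<^sub>i x\<close> with
  \<open>F\<^sub>i = dp\<^sub>i\<inverse> \<circ> k\<^sub>i \<circ> dr\<^sub>i\<inverse> \<circ> a\<^sub>i\<close>. The bounds on the limits of the
  degradation rates make these inverses defined on the ranges that occur, and each \<open>F\<^sub>i\<close>
  is continuous, positive and strictly decreasing on \<open>[0,\<infinity>)\<close>. Steady states thus
  correspond to fixed points of the cyclic composition of the \<open>F\<^sub>i\<close>; for odd \<open>n\<close> this
  composition is again continuous and strictly decreasing, so it crosses the diagonal
  exactly once.\<close>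

lemma C1_nonneg_continuous_on: "C1_nonneg f \<Longrightarrow> continuous_on {0..} f"
  unfolding C1_nonneg_def
  by (auto simp: continuous_on_eq_continuous_within intro: DERIV_continuous)

lemma rate_fun_continuous_on: "rate_fun f \<Longrightarrow> continuous_on {0..} f"
  by (simp add: rate_fun_def C1_nonneg_continuous_on)

lemma rate_fun_pos:
  assumes f: "rate_fun f" and "0 < x"
  shows "0 < f x"
proof (rule ccontr)
  assume "\<not> 0 < f x"
  moreover have "f (x/2) < f x" using f \<open>0 < x\<close> by (simp add: rate_fun_def)
  ultimately have neg: "f (x/2) < 0" by simp
  have "f 0 = 0" using f by (simp add: rate_fun_def)
  moreover have "continuous_on {0..x/2} f"
    using rate_fun_continuous_on[OF f] by (rule continuous_on_subset) auto
  ultimately obtain t where t: "0 \<le> t" "t \<le> x/2" "f t = f (x/2) / 2"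
    using IVT2'[of f "x/2" "f (x/2) / 2" 0] neg \<open>0 < x\<close> by auto
  \<comment> \<open>\<open>f (x/2) / 2\<close> lies strictly between \<open>f (x/2)\<close> and \<open>f 0\<close>, which monotonicity forbids.\<close>
  with neg \<open>f 0 = 0\<close> have "0 < t" "t < x/2"
    by (auto simp: order_le_less)
  then have "f t < f (x/2)" using f by (simp add: rate_fun_def)
  with t neg show False by simp
qed

lemma rate_fun_strict_mono_on:
  assumes f: "rate_fun f"
  shows "strict_mono_on {0..} f"
proof (rule monotone_onI)
  fix x y :: real assume "x \<in> {0..}" "y \<in> {0..}" "x < y"
  then show "f x < f y"
    using f rate_fun_pos[OF f, of y] by (cases "x = 0") (auto simp: rate_fun_def)
qed

lemma rate_fun_image_atLeastAtMost:
  assumes f: "rate_fun f" and "0 \<le> R"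
  shows "f ` {0..R} = {0..f R}"
proof
  have "f 0 = 0" using f by (simp add: rate_fun_def)
  then show "f ` {0..R} \<subseteq> {0..f R}"
    using strict_mono_on_leD[OF rate_fun_strict_mono_on[OF f]] by force
  show "{0..f R} \<subseteq> f ` {0..R}"
  proof
    fix v assume "v \<in> {0..f R}"
    moreover have "continuous_on {0..R} f"
      using rate_fun_continuous_on[OF f] by (rule continuous_on_subset) auto
    ultimately obtain x where "0 \<le> x" "x \<le> R" "f x = v"
      using IVT'[of f 0 v R] \<open>f 0 = 0\<close> \<open>0 \<le> R\<close> by auto
    then show "v \<in> f ` {0..R}" by auto
  qed
qed

lemma rate_fun_inv:
  assumes f: "rate_fun f" and "0 \<le> R" and v: "v \<in> {0..f R}"
  shows "0 \<le> the_inv_into {0..} f v" and "f (the_inv_into {0..} f v) = v"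
proof -
  have inj: "inj_on f {0..}" by (rule strict_mono_on_imp_inj_on[OF rate_fun_strict_mono_on[OF f]])
  have "v \<in> f ` {0..R}" using v rate_fun_image_atLeastAtMost[OF f \<open>0 \<le> R\<close>] by simp
  then have "v \<in> f ` {0..}" by auto
  then show "0 \<le> the_inv_into {0..} f v" "f (the_inv_into {0..} f v) = v"
    using the_inv_into_into[OF inj] f_the_inv_into_f[OF inj] by auto
qed

lemma rate_fun_inv_strict_mono_on:
  assumes f: "rate_fun f" and "0 \<le> R"
  shows "strict_mono_on {0..f R} (the_inv_into {0..} f)"
proof (rule monotone_onI)
  fix u v assume "u \<in> {0..f R}" "v \<in> {0..f R}" "u < v"
  then show "the_inv_into {0..} f u < the_inv_into {0..} f v"
    using rate_fun_inv[OF f \<open>0 \<le> R\<close>]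
      strict_mono_on_less[OF rate_fun_strict_mono_on[OF f]] by (metis atLeast_iff)
qed

lemma rate_fun_inv_continuous_on:
  assumes f: "rate_fun f" and "0 \<le> R"
  shows "continuous_on {0..f R} (the_inv_into {0..} f)"
proof -
  have "inj_on f {0..}" by (rule strict_mono_on_imp_inj_on[OF rate_fun_strict_mono_on[OF f]])
  then have "continuous_on (f ` {0..R}) (the_inv_into {0..} f)"
    using rate_fun_continuous_on[OF f]
    by (intro continuous_on_inv) (auto intro: continuous_on_subset the_inv_into_f_f)
  then show ?thesis by (simp add: rate_fun_image_atLeastAtMost[OF f \<open>0 \<le> R\<close>])
qed

lemma tendsto_ereal_gt_imp_exceeds:
  fixes f :: "real \<Rightarrow> real"
  assumes "((\<lambda>x. ereal (f x)) \<longlongrightarrow> \<delta>) at_top" and "ereal c < \<delta>"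
  shows "\<exists>R\<ge>0. c \<le> f R"
proof -
  have "\<forall>\<^sub>F x in at_top. ereal c < ereal (f x)"
    using order_tendstoD(1)[OF assms] .
  then obtain R0 where "\<And>x. x \<ge> R0 \<Longrightarrow> c < f x"
    by (auto simp: eventually_at_top_linorder)
  then show ?thesis by (intro exI[of _ "max R0 0"]) (simp add: less_imp_le)
qed

lemma strict_mono_on_o_strict_antimono_on:
  "strict_mono_on B f \<Longrightarrow> strict_antimono_on A g \<Longrightarrow> g ` A \<subseteq> B \<Longrightarrow> strict_antimono_on A (f \<circ> g)"
  by (rule monotone_onI) (auto dest: monotone_onD)

definition repression_fun :: "(real \<Rightarrow> real) \<Rightarrow> bool" where
  "repression_fun u \<longleftrightarrow>
     continuous_on {0..} u \<and> strict_antimono_on {0..} u \<and> u ` {0..} \<subseteq> {0<..}"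

lemma repression_fun_pos: "repression_fun u \<Longrightarrow> 0 \<le> x \<Longrightarrow> 0 < u x"
  by (auto simp: repression_fun_def)

lemma repression_fun_le:
  assumes "repression_fun u" and "0 \<le> x"
  shows "u x \<le> u 0"
  using assms monotone_onD[of "{0..}" "(<)" "\<lambda>x y. y < x" u 0 x]
  by (cases "x = 0") (auto simp: repression_fun_def)

lemma transcription_fun_repression_fun:
  assumes a: "transcription_fun a"
  shows "repression_fun a"
proof -
  have "0 < a x" if "0 \<le> x" for x
  proof -
    have "0 \<le> a (x + 1)" "a (x + 1) < a x" using a that by (auto simp: transcription_fun_def)
    then show ?thesis by simp
  qed
  with a show ?thesis
    by (auto simp: transcription_fun_def repression_fun_def C1_nonneg_continuous_on
        intro: monotone_onI)
qed

lemma rate_fun_o_repression_fun: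
  assumes f: "rate_fun f" and u: "repression_fun u"
  shows "repression_fun (f \<circ> u)"
  unfolding repression_fun_def
proof (intro conjI)
  show "continuous_on {0..} (f \<circ> u)"
    using u unfolding comp_def repression_fun_def
    by (intro continuous_on_compose2[OF rate_fun_continuous_on[OF f]]) auto
  show "strict_antimono_on {0..} (f \<circ> u)"
    using u by (intro strict_mono_on_o_strict_antimono_on[OF rate_fun_strict_mono_on[OF f]])
      (auto simp: repression_fun_def)
  show "(f \<circ> u) ` {0..} \<subseteq> {0<..}"
    using u rate_fun_pos[OF f] by (auto simp: repression_fun_def)
qed

lemma rate_fun_inv_o_repression_fun:
  assumes f: "rate_fun f" and u: "repression_fun u" and "0 \<le> R" and bound: "u 0 \<le> f R"
  shows "repression_fun (the_inv_into {0..} f \<circ> u)"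
    and "0 \<le> x \<Longrightarrow> f (the_inv_into {0..} f (u x)) = u x"
proof -
  have range: "u ` {0..} \<subseteq> {0..f R}"
    using u repression_fun_le[OF u] bound by (force simp: repression_fun_def)
  then show "0 \<le> x \<Longrightarrow> f (the_inv_into {0..} f (u x)) = u x"
    using rate_fun_inv(2)[OF f \<open>0 \<le> R\<close>] by auto
  have pos: "0 < the_inv_into {0..} f (u x)" if "0 \<le> x" for x
  proof -
    have "0 < u x" using u that by (auto simp: repression_fun_def)
    moreover have "f (the_inv_into {0..} f (u x)) = u x" "0 \<le> the_inv_into {0..} f (u x)"
      using range rate_fun_inv[OF f \<open>0 \<le> R\<close>] that by auto
    moreover have "f 0 = 0" using f by (simp add: rate_fun_def)
    ultimately show ?thesis by (cases "the_inv_into {0..} f (u x) = 0") auto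
  qed
  show "repression_fun (the_inv_into {0..} f \<circ> u)"
    unfolding repression_fun_def
  proof (intro conjI)
    show "continuous_on {0..} (the_inv_into {0..} f \<circ> u)"
      using u range unfolding comp_def repression_fun_def
      by (intro continuous_on_compose2[OF rate_fun_inv_continuous_on[OF f \<open>0 \<le> R\<close>]]) auto
    show "strict_antimono_on {0..} (the_inv_into {0..} f \<circ> u)"
      using u range
      by (intro strict_mono_on_o_strict_antimono_on[OF rate_fun_inv_strict_mono_on[OF f \<open>0 \<le> R\<close>]])
        (auto simp: repression_fun_def)
    show "(the_inv_into {0..} f \<circ> u) ` {0..} \<subseteq> {0<..}"
      using pos by auto
  qed
qed

locale repressilator_gene =
  fixes a dr k dp :: "real \<Rightarrow> real"
  assumes transcription: "transcription_fun a"
    and rate_dr: "rate_fun dr" and rate_k: "rate_fun k" and rate_dp: "rate_fun dp"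
    \<comment> \<open>The conditions on the limits of \<open>dr\<close> and \<open>dp\<close> are only needed in this form.\<close>
    and dr_exceeds: "\<exists>R\<ge>0. a 0 \<le> dr R"
    and dp_exceeds: "\<exists>R\<ge>0. k (the_inv_into {0..} dr (a 0)) \<le> dp R"
begin

definition mrna_level :: "real \<Rightarrow> real" where
  "mrna_level = the_inv_into {0..} dr \<circ> a"

definition protein_level :: "real \<Rightarrow> real" where
  "protein_level = the_inv_into {0..} dp \<circ> (k \<circ> mrna_level)"

lemma mrna_level: "repression_fun mrna_level" "0 \<le> x \<Longrightarrow> dr (mrna_level x) = a x"
proof -
  obtain R where "0 \<le> R" "a 0 \<le> dr R" using dr_exceeds by blast
  from rate_fun_inv_o_repression_fun[OF rate_dr transcription_fun_repression_fun[OF transcription] this]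
  show "repression_fun mrna_level" "0 \<le> x \<Longrightarrow> dr (mrna_level x) = a x"
    by (simp_all add: mrna_level_def)
qed

lemma protein_level: "repression_fun protein_level" "0 \<le> x \<Longrightarrow> dp (protein_level x) = k (mrna_level x)"
proof -
  obtain R where "0 \<le> R" "(k \<circ> mrna_level) 0 \<le> dp R" using dp_exceeds by (auto simp: mrna_level_def)
  from rate_fun_inv_o_repression_fun[OF rate_dp rate_fun_o_repression_fun[OF rate_k mrna_level(1)] this]
  show "repression_fun protein_level" "0 \<le> x \<Longrightarrow> dp (protein_level x) = k (mrna_level x)"
    by (simp_all add: protein_level_def comp_def)
qed

lemma steady_state_iff:
  assumes "0 \<le> x"
  shows "(0 < r \<and> 0 < q \<and> a x - dr r = 0 \<and> k r - dp q = 0) \<longleftrightarrow>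
         r = mrna_level x \<and> q = protein_level x"
proof
  have inj_dr: "inj_on dr {0..}" and inj_dp: "inj_on dp {0..}"
    using rate_dr rate_dp by (auto intro: strict_mono_on_imp_inj_on rate_fun_strict_mono_on)
  assume "0 < r \<and> 0 < q \<and> a x - dr r = 0 \<and> k r - dp q = 0"
  moreover from this have r: "r = mrna_level x"
    using inj_dr by (auto simp: mrna_level_def intro: the_inv_into_f_eq[symmetric])
  ultimately show "r = mrna_level x \<and> q = protein_level x"
    using inj_dp by (auto simp: protein_level_def intro: the_inv_into_f_eq[symmetric])
next
  assume "r = mrna_level x \<and> q = protein_level x"
  then show "0 < r \<and> 0 < q \<and> a x - dr r = 0 \<and> k r - dp q = 0"
    using mrna_level protein_level \<open>0 \<le> x\<close> by (auto simp: repression_fun_def)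
qed

end

lemma fold_repression_funs_nonneg:
  assumes "\<forall>i<m. repression_fun (F i)" and "0 \<le> x"
  shows "0 \<le> fold F [0..<m] x"
  using assms
proof (induction m)
  case (Suc m)
  then show ?case using repression_fun_pos[of "F m" "fold F [0..<m] x"] by simp
qed simp

lemma continuous_on_fold_repression_funs:
  assumes "\<forall>i<m. repression_fun (F i)"
  shows "continuous_on {0..} (fold F [0..<m])"
  using assms
proof (induction m)
  case (Suc m)
  have "continuous_on {0..} (F m)" using Suc.prems by (simp add: repression_fun_def)
  moreover have "continuous_on {0..} (fold F [0..<m])" using Suc by simp
  moreover have "fold F [0..<m] ` {0..} \<subseteq> {0..}"
    using Suc.prems fold_repression_funs_nonneg[of m F] by auto
  ultimately have "continuous_on {0..} (\<lambda>x. F m (fold F [0..<m] x))"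
    by (rule continuous_on_compose2)
  then show ?case by simp
qed (simp add: continuous_on_id)

lemma fold_repression_funs_monotone:
  assumes "\<forall>i<m. repression_fun (F i)"
  shows "(even m \<longrightarrow> strict_mono_on {0..} (fold F [0..<m])) \<and>
         (odd m \<longrightarrow> strict_antimono_on {0..} (fold F [0..<m]))"
  using assms
proof (induction m)
  case 0
  then show ?case by (simp add: monotone_on_def)
next
  case (Suc m)
  have F: "strict_antimono_on {0..} (F m)" using Suc.prems by (simp add: repression_fun_def)
  have IH: "(even m \<longrightarrow> strict_mono_on {0..} (fold F [0..<m])) \<and>
      (odd m \<longrightarrow> strict_antimono_on {0..} (fold F [0..<m]))"
    using Suc.IH Suc.prems by simp
  have nonneg: "0 \<le> fold F [0..<m] x" if "x \<in> {0..}" for x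
    using Suc.prems that fold_repression_funs_nonneg[of m F x] by simp
  show ?case
  proof (intro conjI impI monotone_onI)
    fix x y :: real assume xy: "x \<in> {0..}" "y \<in> {0..}" "x < y" and "even (Suc m)"
    then have "strict_antimono_on {0..} (fold F [0..<m])" using IH by simp
    then have "fold F [0..<m] y < fold F [0..<m] x" using xy by (rule monotone_onD)
    then show "fold F [0..<Suc m] x < fold F [0..<Suc m] y"
      using monotone_onD[OF F] nonneg xy by simp
  next
    fix x y :: real assume xy: "x \<in> {0..}" "y \<in> {0..}" "x < y" and "odd (Suc m)"
    then have "strict_mono_on {0..} (fold F [0..<m])" using IH by simp
    then have "fold F [0..<m] x < fold F [0..<m] y" using xy by (rule monotone_onD)
    then show "fold F [0..<Suc m] y < fold F [0..<Suc m] x"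
      using monotone_onD[OF F] nonneg xy by simp
  qed
qed

lemma strict_antimono_on_unique_fixed_point:
  fixes G :: "real \<Rightarrow> real"
  assumes cont: "continuous_on {0..} G" and nonneg: "G ` {0..} \<subseteq> {0..}"
    and anti: "strict_antimono_on {0..} G"
  shows "\<exists>!x. 0 \<le> x \<and> G x = x"
proof (rule ex_ex1I)
  \<comment> \<open>\<open>x - G x\<close> changes sign on \<open>[0, G 0]\<close>.\<close>
  have "0 \<le> G 0" using nonneg by auto
  then have "G (G 0) \<le> G 0"
    using monotone_onD[OF anti, of 0 "G 0"] by (cases "G 0 = 0") auto
  moreover have "continuous_on {0..G 0} (\<lambda>x. x - G x)"
    by (intro continuous_intros continuous_on_subset[OF cont]) auto
  ultimately obtain x where "0 \<le> x" "x - G x = 0"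
    using IVT'[of "\<lambda>x. x - G x" 0 0 "G 0"] \<open>0 \<le> G 0\<close> by auto
  then show "\<exists>x. 0 \<le> x \<and> G x = x" by auto
next
  fix x y assume x: "0 \<le> x \<and> G x = x" and y: "0 \<le> y \<and> G y = y"
  show "x = y"
  proof (rule ccontr)
    assume "x \<noteq> y"
    then consider "x < y" | "y < x" by linarith
    then show False
      using monotone_onD[OF anti, of x y] monotone_onD[OF anti, of y x] x y by cases auto
  qed
qed

definition cyclic_solution :: "nat \<Rightarrow> (nat \<Rightarrow> real \<Rightarrow> real) \<Rightarrow> (nat \<Rightarrow> real) \<Rightarrow> bool" where
  "cyclic_solution n F p \<longleftrightarrow> (\<forall>i<n. 0 < p i \<and> p i = F i (p ((i + n - 1) mod n)))"

lemma cyclic_pred_eq: "(j::nat) < n \<Longrightarrow> (j + n - 1) mod n = (if j = 0 then n - 1 else j - 1)"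
  by (cases j) simp_all

lemma cyclic_solution_eq_fold:
  assumes p: "cyclic_solution n F p" and "j < n"
  shows "p j = fold F [0..<Suc j] (p (n - 1))"
  using \<open>j < n\<close>
proof (induction j)
  case 0
  have "p 0 = F 0 (p ((0 + n - 1) mod n))" using p 0 unfolding cyclic_solution_def by blast
  also have "(0 + n - 1) mod n = n - 1" using cyclic_pred_eq[OF 0] by simp
  finally show ?case by simp
next
  case (Suc j)
  have "p (Suc j) = F (Suc j) (p ((Suc j + n - 1) mod n))"
    using p Suc.prems unfolding cyclic_solution_def by blast
  also have "(Suc j + n - 1) mod n = j" using cyclic_pred_eq[OF Suc.prems] by simp
  finally show ?case using Suc by simp
qed

lemma cyclic_solution_of_fixed_point:
  assumes "0 < n" and F: "\<forall>i<n. repression_fun (F i)"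
    and "0 \<le> x" and fixed: "fold F [0..<n] x = x"
  shows "cyclic_solution n F (\<lambda>j. fold F [0..<Suc j] x)"
  unfolding cyclic_solution_def
proof (intro allI impI conjI)
  fix i assume "i < n"
  have "0 \<le> fold F [0..<i] x"
    using F \<open>i < n\<close> \<open>0 \<le> x\<close> by (intro fold_repression_funs_nonneg) auto
  then show "0 < fold F [0..<Suc i] x"
    using F \<open>i < n\<close> repression_fun_pos by simp
  have "Suc ((i + n - 1) mod n) = (if i = 0 then n else i)"
    using cyclic_pred_eq[OF \<open>i < n\<close>] \<open>0 < n\<close> by simp
  then have "fold F [0..<Suc ((i + n - 1) mod n)] x = fold F [0..<i] x"
    using fixed by simp
  then show "fold F [0..<Suc i] x = F i (fold F [0..<Suc ((i + n - 1) mod n)] x)"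
    by simp
qed

lemma cyclic_solution_exists_unique:
  assumes "odd n" and F: "\<forall>i<n. repression_fun (F i)"
  shows "\<exists>p. cyclic_solution n F p"
    and "cyclic_solution n F p \<Longrightarrow> cyclic_solution n F q \<Longrightarrow> i < n \<Longrightarrow> p i = q i"
proof -
  have "0 < n" using \<open>odd n\<close> by (cases n) auto
  have "\<exists>!x. 0 \<le> x \<and> fold F [0..<n] x = x"
    using F \<open>odd n\<close> fold_repression_funs_nonneg[OF F]
    by (intro strict_antimono_on_unique_fixed_point continuous_on_fold_repression_funs)
      (auto simp: fold_repression_funs_monotone)
  then obtain x where x: "0 \<le> x" "fold F [0..<n] x = x"
    and unique: "\<And>y. 0 \<le> y \<Longrightarrow> fold F [0..<n] y = y \<Longrightarrow> y = x" by blast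
  show "\<exists>p. cyclic_solution n F p"
    using cyclic_solution_of_fixed_point[OF \<open>0 < n\<close> F x] by blast
  \<comment> \<open>The last protein level of any cyclic solution is the fixed point, and it determines the rest.\<close>
  have last_eq: "p (n - 1) = x" if p: "cyclic_solution n F p" for p
  proof (rule unique)
    have "n - 1 < n" using \<open>0 < n\<close> by simp
    then show "0 \<le> p (n - 1)" using p unfolding cyclic_solution_def by (blast intro: less_imp_le)
    show "fold F [0..<n] (p (n - 1)) = p (n - 1)"
      using cyclic_solution_eq_fold[OF p, of "n - 1"] \<open>0 < n\<close> by simp
  qed
  assume "cyclic_solution n F p" "cyclic_solution n F q" "i < n"
  then show "p i = q i" using cyclic_solution_eq_fold last_eq by metis
qed

lemma repressilator_steady_state_iff:
  assumes genes: "\<And>i. i < n \<Longrightarrow> repressilator_gene (a i) (dr i) (k i) (dp i)"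
  shows "repressilator_steady_state n a dr k dp r p \<longleftrightarrow>
    cyclic_solution n (\<lambda>i. repressilator_gene.protein_level (a i) (dr i) (k i) (dp i)) p \<and>
    (\<forall>i<n. r i = repressilator_gene.mrna_level (a i) (dr i) (p ((i + n - 1) mod n)))"
    (is "_ \<longleftrightarrow> cyclic_solution n ?F p \<and> (\<forall>i<n. r i = ?M i (p ((i + n - 1) mod n)))")
proof -
  have gene_iff: "(0 < r i \<and> 0 < p i \<and> a i x - dr i (r i) = 0 \<and> k i (r i) - dp i (p i) = 0)
      \<longleftrightarrow> r i = ?M i x \<and> p i = ?F i x" if "i < n" "0 < x" for i x
    using repressilator_gene.steady_state_iff[OF genes[OF \<open>i < n\<close>]] \<open>0 < x\<close> by simp
  have "(i + n - 1) mod n < n" if "i < n" for i using that by simp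
  then show ?thesis
    unfolding repressilator_steady_state_def cyclic_solution_def
    using gene_iff by blast
qed

theorem proposition1:
  fixes n :: nat
    and a dr dp k :: "nat \<Rightarrow> real \<Rightarrow> real"
  assumes n_odd: "odd n"
    and a_ok: "\<And>i. i < n \<Longrightarrow> transcription_fun (a i)"
    and dr_ok: "\<And>i. i < n \<Longrightarrow> rate_fun (dr i)"
    and dp_ok: "\<And>i. i < n \<Longrightarrow> rate_fun (dp i)"
    and k_ok: "\<And>i. i < n \<Longrightarrow> rate_fun (k i)"
    and hR: "\<And>i. i < n \<Longrightarrow> \<exists>\<delta>::ereal.
               ((\<lambda>x. ereal (dr i x)) \<longlongrightarrow> \<delta>) at_top \<and> \<delta> > ereal (a i 0)"
    and hP: "\<And>i. i < n \<Longrightarrow> \<exists>\<delta>::ereal.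
               ((\<lambda>x. ereal (dp i x)) \<longlongrightarrow> \<delta>) at_top \<and>
               \<delta> > ereal (k i (the_inv_into {0..} (dr i) (a i 0)))"
  shows "(\<exists>r p. repressilator_steady_state n a dr k dp r p) \<and>
         (\<forall>r p r' p'. repressilator_steady_state n a dr k dp r p \<longrightarrow>
             repressilator_steady_state n a dr k dp r' p' \<longrightarrow>
             (\<forall>i<n. r i = r' i \<and> p i = p' i))"
proof -
  have genes: "repressilator_gene (a i) (dr i) (k i) (dp i)" if "i < n" for i
    using a_ok dr_ok k_ok dp_ok hR hP tendsto_ereal_gt_imp_exceeds that
    by (simp add: repressilator_gene_def) blast
  let ?M = "\<lambda>i. repressilator_gene.mrna_level (a i) (dr i)"
  let ?F = "\<lambda>i. repressilator_gene.protein_level (a i) (dr i) (k i) (dp i)"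
  have F: "\<forall>i<n. repression_fun (?F i)"
    using repressilator_gene.protein_level(1)[OF genes] by blast
  have steady_iff: "repressilator_steady_state n a dr k dp r p \<longleftrightarrow>
      cyclic_solution n ?F p \<and> (\<forall>i<n. r i = ?M i (p ((i + n - 1) mod n)))" for r p
    using genes by (rule repressilator_steady_state_iff)
  obtain q where "cyclic_solution n ?F q"
    using cyclic_solution_exists_unique(1)[OF n_odd F] by blast
  then have "repressilator_steady_state n a dr k dp (\<lambda>i. ?M i (q ((i + n - 1) mod n))) q"
    using steady_iff by blast
  moreover have "r i = r' i \<and> p i = p' i"
    if "repressilator_steady_state n a dr k dp r p"
      and "repressilator_steady_state n a dr k dp r' p'" and "i < n" for r p r' p' i
  proof -
    have "p j = p' j" if "j < n" for j
      using cyclic_solution_exists_unique(2)[OF n_odd F] steady_iff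
        \<open>repressilator_steady_state n a dr k dp r p\<close>
        \<open>repressilator_steady_state n a dr k dp r' p'\<close> that by blast
    moreover have "(i + n - 1) mod n < n" using \<open>i < n\<close> by simp
    ultimately show ?thesis using steady_iff that by metis
  qed
  ultimately show ?thesis by blast
qed

end
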